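(* Consider the 2D patch scheme: $N_x\times N_y$ patches indexed $(I,J)$ on a doubly periodic macroscale lattice, each with interior points $(i,j)$, $i=1,\dots,n_x$, $j=1,\dots,n_y$, and interior values evolving by $$\partial_tu^{I,J}_{i,j}=\big[\kappa^{I,J}_{i+\frac12,j}(u^{I,J}_{i+1,j}-u^{I,J}_{i,j})+\kappa^{I,J}_{i-\frac12,j}(u^{I,J}_{i-1,j}-u^{I,J}_{i,j})\big]/d_x^2+\big[\kappa^{I,J}_{i,j+\frac12}(u^{I,J}_{i,j+1}-u^{I,J}_{i,j})+\kappa^{I,J}_{i,j-\frac12}(u^{I,J}_{i,j-1}-u^{I,J}_{i,j})\big]/d_y^2,$$ with real diffusivities satisfying $\kappa^{I,J}_{1/2,j}=\kappa^{K,J}_{n_x+1/2,j}$ for all $I,K,J,j$ and $\kappa^{I,J}_{i,1/2}=\kappa^{I,K}_{i,n_y+1/2}$ for all $I,J,K,i$. Edge values are given by $$u^{I,J}_{0,j}=\sum_K\mathcal I^{IK}_{1n_x}u^{K,J}_{n_x,j},\quad u^{I,J}_{n_x+1,j}=\sum_K\mathcal I^{IK}_{n_x1}u^{K,J}_{1,j}\ (j=1,\dots,n_y),$$ $$u^{I,J}_{i,0}=\sum_K\mathcal J^{JK}_{1n_y}u^{I,K}_{i,n_y},\quad u^{I,J}_{i,n_y+1}=\sum_K\mathcal J^{JK}_{n_y1}u^{I,K}_{i,1}\ (i=1,\dots,n_x),$$ where $\mathcal I$ are the 1D spectral or Lagrangian interpolation coefficients in $x$ (with $N_x$ patches and ratio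 $r_x=h_x/H_x$) and $\mathcal J$ those in $y$ (with $N_y$ patches and ratio $r_y=h_y/H_y$). Then the linear system $\partial_t\mathbf u=\mathcal L\mathbf u$ on all interior values has a real symmetric (self-adjoint) matrix $\mathcal L$.
   Context: 1D spectral interpolation coefficients (for $N$ patches, spacing $H$, ratio $r$, domain length $L=NH$): $\mathcal I^{IJ}_{n1}=\frac1N\sum_{k\in\mathcal K}e^{\mathrm ikH(I-J+r)}$, $\mathcal I^{IJ}_{1n}=\frac1N\sum_{k\in\mathcal K}e^{\mathrm ikH(I-J-r)}$, $\mathcal K$ a fixed finite symmetric set of integer multiples of $2\pi/L$. 1D Lagrangian interpolation coefficients of order $P$: defined by $u^I_{n+1}=u^I_1+\sum_{k=1}^P\big(\prod_{\ell=0}^{k-1}(r^2-\ell^2)\big)\frac{(2k/r)\mu\delta^{2k-1}+\delta^{2k}}{(2k)!}u^I_1=\sum_J\mathcal I^{IJ}_{n1}u^J_1$ and $u^I_{0}=u^I_n+\sum_{k=1}^P\big(\prod_{\ell=0}^{k-1}(r^2-\ell^2)\big)\frac{-(2k/r)\mu\delta^{2k-1}+\delta^{2k}}{(2k)!}u^I_n=\sum_J\mathcal I^{IJ}_{1n}u^J_n$, where $Eu^I=u^{I+1}$ cyclically, $\mu\delta^{2k-1}:=\tfrac12(E-E^{-1})(E-2+E^{-1})^{k-1}$, $\delta^{2k}:=(E-2+E^{-1})^k$. Patch widths $h_x=n_xd_x$, $h_y=n_yd_y$. *)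

theory Defs
  imports Complex_Main
begin

text \<open>Patches are indexed I = 0..N-1 (cyclically). The wavenumber set K is a finite
symmetric set of integer multiples of 2 pi / L with L = N H; we encode it by the set M of
integers m with k = 2 pi m / L.\<close>

definition spectral_n1 :: "nat \<Rightarrow> real \<Rightarrow> real \<Rightarrow> int set \<Rightarrow> nat \<Rightarrow> nat \<Rightarrow> complex" where
  "spectral_n1 N H r M I J =
     (1 / of_nat N) * (\<Sum>m\<in>M. exp (\<i> * of_real ((2 * pi * of_int m / (real N * H)) * H
                                       * (real I - real J + r))))"

definition spectral_1n :: "nat \<Rightarrow> real \<Rightarrow> real \<Rightarrow> int set \<Rightarrow> nat \<Rightarrow> nat \<Rightarrow> complex" where
  "spectral_1n N H r M I J =
     (1 / of_nat N) * (\<Sum>m\<in>M. exp (\<i> * of_real ((2 * pi * of_int m / (real N * H)) * H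
                                       * (real I - real J - r))))"

definition shiftE :: "nat \<Rightarrow> (nat \<Rightarrow> real) \<Rightarrow> (nat \<Rightarrow> real)" where
  "shiftE N u = (\<lambda>I. u ((I + 1) mod N))"

definition shiftEinv :: "nat \<Rightarrow> (nat \<Rightarrow> real) \<Rightarrow> (nat \<Rightarrow> real)" where
  "shiftEinv N u = (\<lambda>I. u ((I + N - 1) mod N))"

definition delta2 :: "nat \<Rightarrow> (nat \<Rightarrow> real) \<Rightarrow> (nat \<Rightarrow> real)" where
  "delta2 N u = (\<lambda>I. shiftE N u I - 2 * u I + shiftEinv N u I)"

text \<open>mu delta^{2k-1} = 1/2 (E - E^{-1}) (E - 2 + E^{-1})^{k-1}\<close>
definition mu_delta_odd :: "nat \<Rightarrow> nat \<Rightarrow> (nat \<Rightarrow> real) \<Rightarrow> (nat \<Rightarrow> real)" where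
  "mu_delta_odd N k u =
     (let v = (delta2 N ^^ (k - 1)) u in (\<lambda>I. (shiftE N v I - shiftEinv N v I) / 2))"

definition delta_even :: "nat \<Rightarrow> nat \<Rightarrow> (nat \<Rightarrow> real) \<Rightarrow> (nat \<Rightarrow> real)" where
  "delta_even N k u = (delta2 N ^^ k) u"

definition lagr_op_n1 :: "nat \<Rightarrow> real \<Rightarrow> nat \<Rightarrow> (nat \<Rightarrow> real) \<Rightarrow> (nat \<Rightarrow> real)" where
  "lagr_op_n1 N r P u = (\<lambda>I. u I + (\<Sum>k=1..P. (\<Prod>l<k. r\<^sup>2 - (real l)\<^sup>2) *
      ((2 * real k / r) * mu_delta_odd N k u I + delta_even N k u I) / fact (2 * k)))"

definition lagr_op_1n :: "nat \<Rightarrow> real \<Rightarrow> nat \<Rightarrow> (nat \<Rightarrow> real) \<Rightarrow> (nat \<Rightarrow> real)" where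
  "lagr_op_1n N r P u = (\<lambda>I. u I + (\<Sum>k=1..P. (\<Prod>l<k. r\<^sup>2 - (real l)\<^sup>2) *
      (- (2 * real k / r) * mu_delta_odd N k u I + delta_even N k u I) / fact (2 * k)))"

definition lagr_n1 :: "nat \<Rightarrow> real \<Rightarrow> nat \<Rightarrow> nat \<Rightarrow> nat \<Rightarrow> real" where
  "lagr_n1 N r P I J = lagr_op_n1 N r P (\<lambda>K. if K = J then 1 else 0) I"

definition lagr_1n :: "nat \<Rightarrow> real \<Rightarrow> nat \<Rightarrow> nat \<Rightarrow> nat \<Rightarrow> real" where
  "lagr_1n N r P I J = lagr_op_1n N r P (\<lambda>K. if K = J then 1 else 0) I"

definition interp_coeffs ::
  "nat \<Rightarrow> real \<Rightarrow> real \<Rightarrow> (nat \<Rightarrow> nat \<Rightarrow> complex) \<Rightarrow> (nat \<Rightarrow> nat \<Rightarrow> complex) \<Rightarrow> bool" where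
  "interp_coeffs N H r Cn1 C1n \<longleftrightarrow>
     (\<exists>M. finite M \<and> (\<forall>m\<in>M. - m \<in> M) \<and>
          Cn1 = spectral_n1 N H r M \<and> C1n = spectral_1n N H r M) \<or>
     (\<exists>P. Cn1 = (\<lambda>I J. complex_of_real (lagr_n1 N r P I J)) \<and>
          C1n = (\<lambda>I J. complex_of_real (lagr_1n N r P I J)))"

definition interior_idx :: "nat \<Rightarrow> nat \<Rightarrow> nat \<Rightarrow> nat \<Rightarrow> (nat \<times> nat \<times> nat \<times> nat) set" where
  "interior_idx Nx Ny nx ny = {(I, J, i, j). I < Nx \<and> J < Ny \<and> 1 \<le> i \<and> i \<le> nx \<and> 1 \<le> j \<and> j \<le> ny}"

text \<open>Interior values extended by the edge values given by the coupling conditions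
(corner values are never used; set to 0).\<close>
definition patch_ext ::
  "nat \<Rightarrow> nat \<Rightarrow> nat \<Rightarrow> nat \<Rightarrow>
   (nat \<Rightarrow> nat \<Rightarrow> complex) \<Rightarrow> (nat \<Rightarrow> nat \<Rightarrow> complex) \<Rightarrow>
   (nat \<Rightarrow> nat \<Rightarrow> complex) \<Rightarrow> (nat \<Rightarrow> nat \<Rightarrow> complex) \<Rightarrow>
   (nat \<times> nat \<times> nat \<times> nat \<Rightarrow> complex) \<Rightarrow> nat \<Rightarrow> nat \<Rightarrow> nat \<Rightarrow> nat \<Rightarrow> complex" where
  "patch_ext Nx Ny nx ny Ixn1 Ix1n Jyn1 Jy1n u I J i j =
     (if 1 \<le> i \<and> i \<le> nx \<and> 1 \<le> j \<and> j \<le> ny then u (I, J, i, j)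
      else if i = 0 \<and> 1 \<le> j \<and> j \<le> ny then (\<Sum>K<Nx. Ix1n I K * u (K, J, nx, j))
      else if i = nx + 1 \<and> 1 \<le> j \<and> j \<le> ny then (\<Sum>K<Nx. Ixn1 I K * u (K, J, 1, j))
      else if j = 0 \<and> 1 \<le> i \<and> i \<le> nx then (\<Sum>K<Ny. Jy1n J K * u (I, K, i, ny))
      else if j = ny + 1 \<and> 1 \<le> i \<and> i \<le> nx then (\<Sum>K<Ny. Jyn1 J K * u (I, K, i, 1))
      else 0)"

text \<open>Right-hand side of the patch scheme. kx I J i j is kappa^{I,J}_{i+1/2, j} (i = 0..nx),
ky I J i j is kappa^{I,J}_{i, j+1/2} (j = 0..ny).\<close>
definition patch_op ::
  "nat \<Rightarrow> nat \<Rightarrow> nat \<Rightarrow> nat \<Rightarrow> real \<Rightarrow> real \<Rightarrow>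
   (nat \<Rightarrow> nat \<Rightarrow> nat \<Rightarrow> nat \<Rightarrow> real) \<Rightarrow> (nat \<Rightarrow> nat \<Rightarrow> nat \<Rightarrow> nat \<Rightarrow> real) \<Rightarrow>
   (nat \<Rightarrow> nat \<Rightarrow> complex) \<Rightarrow> (nat \<Rightarrow> nat \<Rightarrow> complex) \<Rightarrow>
   (nat \<Rightarrow> nat \<Rightarrow> complex) \<Rightarrow> (nat \<Rightarrow> nat \<Rightarrow> complex) \<Rightarrow>
   (nat \<times> nat \<times> nat \<times> nat \<Rightarrow> complex) \<Rightarrow> (nat \<times> nat \<times> nat \<times> nat \<Rightarrow> complex)" where
  "patch_op Nx Ny nx ny dx dy kx ky Ixn1 Ix1n Jyn1 Jy1n u =
     (\<lambda>(I, J, i, j).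
        let w = patch_ext Nx Ny nx ny Ixn1 Ix1n Jyn1 Jy1n u I J in
        (of_real (kx I J i j) * (w (i + 1) j - w i j)
           + of_real (kx I J (i - 1) j) * (w (i - 1) j - w i j)) / of_real (dx\<^sup>2)
      + (of_real (ky I J i j) * (w i (j + 1) - w i j)
           + of_real (ky I J i (j - 1)) * (w i (j - 1) - w i j)) / of_real (dy\<^sup>2))"

definition patch_matrix ::
  "nat \<Rightarrow> nat \<Rightarrow> nat \<Rightarrow> nat \<Rightarrow> real \<Rightarrow> real \<Rightarrow>
   (nat \<Rightarrow> nat \<Rightarrow> nat \<Rightarrow> nat \<Rightarrow> real) \<Rightarrow> (nat \<Rightarrow> nat \<Rightarrow> nat \<Rightarrow> nat \<Rightarrow> real) \<Rightarrow>
   (nat \<Rightarrow> nat \<Rightarrow> complex) \<Rightarrow> (nat \<Rightarrow> nat \<Rightarrow> complex) \<Rightarrow>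
   (nat \<Rightarrow> nat \<Rightarrow> complex) \<Rightarrow> (nat \<Rightarrow> nat \<Rightarrow> complex) \<Rightarrow>
   (nat \<times> nat \<times> nat \<times> nat) \<Rightarrow> (nat \<times> nat \<times> nat \<times> nat) \<Rightarrow> complex" where
  "patch_matrix Nx Ny nx ny dx dy kx ky Ixn1 Ix1n Jyn1 Jy1n a b =
     patch_op Nx Ny nx ny dx dy kx ky Ixn1 Ix1n Jyn1 Jy1n (\<lambda>c. if c = b then 1 else 0) a"

end

theory Submission
  imports Defs
begin

text \<open>Work along one coordinate line at a time. There the scheme is a three-point stencil
with symmetric interior weights, and the only non-local entries come from the edge values: the
coefficient of u^Q_1 in the right edge value of patch P is I_n1(P,Q), that of u^P_n in the
left edge value of patch Q is I_1n(Q,P), and periodicity of the diffusivities gives both the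
same weight. So the matrix is symmetric as soon as I_n1 is the transpose of I_1n. For spectral
interpolation this follows from the symmetry of the wavenumber set, which also makes the
coefficients real. For Lagrangian interpolation, I_n1 and I_1n are the matrices of two
polynomials in the cyclic shift that differ only in the sign of the odd differences
mu delta^(2k-1); these are skew-adjoint for the cyclic inner product while the even differences
delta^(2k) are self-adjoint, so the two operators are adjoint to each other.\<close>

definition cyc_inner :: "nat \<Rightarrow> (nat \<Rightarrow> real) \<Rightarrow> (nat \<Rightarrow> real) \<Rightarrow> real" where
  "cyc_inner N u v = (\<Sum>I<N. u I * v I)"

lemma cyc_inner_commute: "cyc_inner N u v = cyc_inner N v u"
  unfolding cyc_inner_def by (simp add: mult.commute)

lemma cyc_inner_unit_right: "I < N \<Longrightarrow> cyc_inner N u (\<lambda>K. if K = I then 1 else 0) = u I"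
  unfolding cyc_inner_def by (simp add: if_distrib cong: if_cong)

lemma pred_mod_Suc_mod: "0 < N \<Longrightarrow> (Suc I mod N + N - Suc 0) mod N = I mod N"
  by (cases "Suc (I mod N) = N") (auto simp: mod_Suc)

lemma Suc_mod_pred_mod: "0 < N \<Longrightarrow> Suc ((I + N - Suc 0) mod N) mod N = I mod N"
  by (simp add: mod_Suc_eq)

lemma cyc_inner_shiftE:
  assumes "0 < N"
  shows "cyc_inner N (shiftE N u) v = cyc_inner N u (shiftEinv N v)"
  unfolding cyc_inner_def shiftE_def shiftEinv_def
proof (rule sum.reindex_bij_witness[of _ "\<lambda>J. (J + N - 1) mod N" "\<lambda>I. Suc I mod N"])
qed (use assms pred_mod_Suc_mod[OF assms] Suc_mod_pred_mod[OF assms] in auto)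

lemma cyc_inner_shiftEinv:
  assumes "0 < N"
  shows "cyc_inner N (shiftEinv N u) v = cyc_inner N u (shiftE N v)"
  using cyc_inner_shiftE[OF assms, of v u] by (simp add: cyc_inner_commute)

lemma shiftE_shiftEinv_commute: "0 < N \<Longrightarrow> shiftE N (shiftEinv N u) = shiftEinv N (shiftE N u)"
  unfolding shiftE_def shiftEinv_def by (simp add: pred_mod_Suc_mod Suc_mod_pred_mod)

lemma cyc_inner_delta2_self_adjoint:
  assumes "0 < N"
  shows "cyc_inner N (delta2 N u) v = cyc_inner N u (delta2 N v)"
proof -
  have "cyc_inner N (delta2 N u) v
      = cyc_inner N (shiftE N u) v - 2 * cyc_inner N u v + cyc_inner N (shiftEinv N u) v"
    unfolding cyc_inner_def delta2_def
    by (simp add: algebra_simps sum.distrib sum_subtractf sum_distrib_left)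
  also have "\<dots> = cyc_inner N u (shiftEinv N v) - 2 * cyc_inner N u v + cyc_inner N u (shiftE N v)"
    by (simp add: cyc_inner_shiftE[OF assms] cyc_inner_shiftEinv[OF assms])
  also have "\<dots> = cyc_inner N u (delta2 N v)"
    unfolding cyc_inner_def delta2_def
    by (simp add: algebra_simps sum.distrib sum_subtractf sum_distrib_left)
  finally show ?thesis .
qed

definition central_diff :: "nat \<Rightarrow> (nat \<Rightarrow> real) \<Rightarrow> (nat \<Rightarrow> real)" where
  "central_diff N u = (\<lambda>I. (shiftE N u I - shiftEinv N u I) / 2)"

lemma cyc_inner_central_diff_skew_adjoint:
  assumes "0 < N"
  shows "cyc_inner N (central_diff N u) v = - cyc_inner N u (central_diff N v)"
proof -
  have "cyc_inner N (central_diff N u) v = (cyc_inner N (shiftE N u) v - cyc_inner N (shiftEinv N u) v) / 2"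
    unfolding cyc_inner_def central_diff_def
    by (simp add: left_diff_distrib sum_subtractf sum_divide_distrib[symmetric])
  also have "\<dots> = (cyc_inner N u (shiftEinv N v) - cyc_inner N u (shiftE N v)) / 2"
    by (simp add: cyc_inner_shiftE[OF assms] cyc_inner_shiftEinv[OF assms])
  also have "\<dots> = - cyc_inner N u (central_diff N v)"
    unfolding cyc_inner_def central_diff_def
    by (simp add: right_diff_distrib sum_subtractf sum_divide_distrib[symmetric] field_simps)
  finally show ?thesis .
qed

lemma shiftE_delta2_commute: "0 < N \<Longrightarrow> shiftE N (delta2 N u) = delta2 N (shiftE N u)"
  unfolding delta2_def by (simp add: shiftE_shiftEinv_commute[symmetric]) (simp add: shiftE_def)

lemma shiftEinv_delta2_commute: "0 < N \<Longrightarrow> shiftEinv N (delta2 N u) = delta2 N (shiftEinv N u)"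
  unfolding delta2_def by (simp add: shiftE_shiftEinv_commute) (simp add: shiftEinv_def)

lemma central_diff_delta2_commute:
  assumes "0 < N"
  shows "central_diff N (delta2 N u) = delta2 N (central_diff N u)"
  unfolding central_diff_def shiftE_delta2_commute[OF assms] shiftEinv_delta2_commute[OF assms]
  by (auto simp: delta2_def shiftE_def shiftEinv_def field_simps)

lemma central_diff_delta2_pow_commute:
  "0 < N \<Longrightarrow> central_diff N ((delta2 N ^^ n) u) = (delta2 N ^^ n) (central_diff N u)"
  by (induction n) (simp_all add: central_diff_delta2_commute)

lemma cyc_inner_delta2_pow_self_adjoint:
  assumes "0 < N"
  shows "cyc_inner N ((delta2 N ^^ n) u) v = cyc_inner N u ((delta2 N ^^ n) v)"
proof (induction n arbitrary: v)
  case 0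
  show ?case by simp
next
  case (Suc n)
  have "cyc_inner N ((delta2 N ^^ Suc n) u) v = cyc_inner N ((delta2 N ^^ n) u) (delta2 N v)"
    by (simp add: cyc_inner_delta2_self_adjoint[OF assms])
  also have "\<dots> = cyc_inner N u ((delta2 N ^^ Suc n) v)"
    by (simp add: Suc funpow_swap1)
  finally show ?case .
qed

lemma mu_delta_odd_eq: "mu_delta_odd N k u = central_diff N ((delta2 N ^^ (k - 1)) u)"
  unfolding mu_delta_odd_def central_diff_def Let_def by simp

lemma cyc_inner_mu_delta_odd_skew_adjoint:
  assumes "0 < N"
  shows "cyc_inner N (mu_delta_odd N k u) v = - cyc_inner N u (mu_delta_odd N k v)"
  unfolding mu_delta_odd_eq cyc_inner_central_diff_skew_adjoint[OF assms]
    cyc_inner_delta2_pow_self_adjoint[OF assms] central_diff_delta2_pow_commute[OF assms] ..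

lemma cyc_inner_delta_even_self_adjoint:
  "0 < N \<Longrightarrow> cyc_inner N (delta_even N k u) v = cyc_inner N u (delta_even N k v)"
  unfolding delta_even_def by (rule cyc_inner_delta2_pow_self_adjoint)

lemma sum_scaled_combination_mult:
  "(\<Sum>I<N. (c * (a * f I + g I) / d) * w I) = c * (a * (\<Sum>I<N. f I * w I) + (\<Sum>I<N. g I * w I)) / (d::real)"
  "(\<Sum>I<N. w I * (c * (a * f I + g I) / d)) = c * (a * (\<Sum>I<N. w I * f I) + (\<Sum>I<N. w I * g I)) / d"
  by (simp_all add: algebra_simps sum.distrib sum_distrib_left sum_divide_distrib add_divide_distrib)

lemma cyc_inner_lagr_op_n1_left:
  "cyc_inner N (lagr_op_n1 N r P u) v = cyc_inner N u v + (\<Sum>k=1..P. (\<Prod>l<k. r\<^sup>2 - (real l)\<^sup>2) *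
      ((2 * real k / r) * cyc_inner N (mu_delta_odd N k u) v + cyc_inner N (delta_even N k u) v)
      / fact (2 * k))"
proof -
  have "cyc_inner N (lagr_op_n1 N r P u) v = cyc_inner N u v + (\<Sum>k=1..P. \<Sum>I<N.
      ((\<Prod>l<k. r\<^sup>2 - (real l)\<^sup>2) * ((2 * real k / r) * mu_delta_odd N k u I + delta_even N k u I)
      / fact (2 * k)) * v I)"
    unfolding cyc_inner_def lagr_op_n1_def
    by (simp add: distrib_right sum.distrib sum_distrib_right) (rule sum.swap)
  then show ?thesis
    unfolding cyc_inner_def sum_scaled_combination_mult .
qed

lemma cyc_inner_lagr_op_1n_right:
  "cyc_inner N u (lagr_op_1n N r P v) = cyc_inner N u v + (\<Sum>k=1..P. (\<Prod>l<k. r\<^sup>2 - (real l)\<^sup>2) *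
      (- (2 * real k / r) * cyc_inner N u (mu_delta_odd N k v) + cyc_inner N u (delta_even N k v))
      / fact (2 * k))"
proof -
  have "cyc_inner N u (lagr_op_1n N r P v) = cyc_inner N u v + (\<Sum>k=1..P. \<Sum>I<N.
      u I * ((\<Prod>l<k. r\<^sup>2 - (real l)\<^sup>2) * (- (2 * real k / r) * mu_delta_odd N k v I + delta_even N k v I)
      / fact (2 * k)))"
    unfolding cyc_inner_def lagr_op_1n_def
    by (simp add: distrib_left sum.distrib sum_distrib_left) (rule sum.swap)
  then show ?thesis
    unfolding cyc_inner_def sum_scaled_combination_mult .
qed

lemma cyc_inner_lagr_op_adjoint:
  "0 < N \<Longrightarrow> cyc_inner N (lagr_op_n1 N r P u) v = cyc_inner N u (lagr_op_1n N r P v)"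
  unfolding cyc_inner_lagr_op_n1_left cyc_inner_lagr_op_1n_right
    cyc_inner_mu_delta_odd_skew_adjoint cyc_inner_delta_even_self_adjoint
  by simp

lemma lagr_n1_eq_lagr_1n_transpose:
  assumes "0 < N" "I < N" "J < N"
  shows "lagr_n1 N r P I J = lagr_1n N r P J I"
proof -
  have "lagr_n1 N r P I J
      = cyc_inner N (lagr_op_n1 N r P (\<lambda>K. if K = J then 1 else 0)) (\<lambda>K. if K = I then 1 else 0)"
    unfolding lagr_n1_def using assms by (simp add: cyc_inner_unit_right)
  also have "\<dots> = cyc_inner N (\<lambda>K. if K = J then 1 else 0) (lagr_op_1n N r P (\<lambda>K. if K = I then 1 else 0))"
    by (rule cyc_inner_lagr_op_adjoint[OF assms(1)])
  also have "\<dots> = lagr_1n N r P J I"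
    unfolding lagr_1n_def using assms by (subst cyc_inner_commute) (simp add: cyc_inner_unit_right)
  finally show ?thesis .
qed

lemma sum_reindex_uminus:
  "finite M \<Longrightarrow> \<forall>m\<in>M. - m \<in> M \<Longrightarrow> (\<Sum>m\<in>M. f m) = (\<Sum>m\<in>M. f (- (m::int)))"
  by (rule sum.reindex_bij_witness[of _ uminus uminus]) auto

lemma spectral_n1_eq_spectral_1n_transpose:
  assumes "finite M" "\<forall>m\<in>M. - m \<in> M"
  shows "spectral_n1 N H r M I K = spectral_1n N H r M K I"
  unfolding spectral_n1_def spectral_1n_def
  by (subst sum_reindex_uminus[OF assms]) (simp add: algebra_simps)

lemma spectral_n1_real:
  assumes "finite M" "\<forall>m\<in>M. - m \<in> M"
  shows "spectral_n1 N H r M I K \<in> \<real>"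
proof -
  define t where "t m = (2 * pi * of_int m / (real N * H)) * H * (real I - real K + r)" for m :: int
  have "cnj (\<Sum>m\<in>M. cis (t m)) = (\<Sum>m\<in>M. cis (t (- m)))"
    by (simp add: cis_cnj t_def)
  also have "\<dots> = (\<Sum>m\<in>M. cis (t m))"
    by (rule sum_reindex_uminus[OF assms, symmetric])
  finally have "(\<Sum>m\<in>M. cis (t m)) \<in> \<real>"
    by (simp add: Reals_cnj_iff)
  then show ?thesis
    unfolding spectral_n1_def t_def cis_conv_exp by simp
qed

lemma interp_coeffs_transpose:
  assumes "interp_coeffs N H r Cn1 C1n" "0 < N" "I < N" "K < N"
  shows "Cn1 I K = C1n K I"
  using assms(1) spectral_n1_eq_spectral_1n_transpose lagr_n1_eq_lagr_1n_transpose[OF assms(2-4)]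
  unfolding interp_coeffs_def by auto

lemma interp_coeffs_real:
  assumes "interp_coeffs N H r Cn1 C1n"
  shows "Cn1 I K \<in> \<real>"
  using assms spectral_n1_real unfolding interp_coeffs_def by auto

text \<open>The coefficient of u^Q_k in kappa^P_(i+1/2) u^P_(i+1) + kappa^P_(i-1/2) u^P_(i-1) along one
coordinate line of length n, where u^P_(n+1) = (SUM Q. A P Q u^Q_1) and
u^P_0 = (SUM Q. B P Q u^Q_n) are the edge values.\<close>

definition line_coupling ::
  "nat \<Rightarrow> (nat \<Rightarrow> nat \<Rightarrow> real) \<Rightarrow> (nat \<Rightarrow> nat \<Rightarrow> complex) \<Rightarrow> (nat \<Rightarrow> nat \<Rightarrow> complex)
   \<Rightarrow> nat \<Rightarrow> nat \<Rightarrow> nat \<Rightarrow> nat \<Rightarrow> complex" where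
  "line_coupling n \<kappa> A B P i Q k =
     of_real (\<kappa> P i) * (if i < n then (if P = Q \<and> k = Suc i then 1 else 0) else (if k = 1 then A P Q else 0))
   + of_real (\<kappa> P (i - 1)) * (if 1 < i then (if P = Q \<and> k = i - 1 then 1 else 0) else (if k = n then B P Q else 0))"

lemma line_coupling_right_eq_left:
  assumes "1 \<le> i" "i \<le> n" "1 \<le> k" "k \<le> n" "\<kappa> Q 0 = \<kappa> P n" "A P Q = B Q P"
  shows "of_real (\<kappa> P i) * (if i < n then (if P = Q \<and> k = Suc i then 1 else 0) else (if k = 1 then A P Q else 0))
     = of_real (\<kappa> Q (k - 1)) * (if 1 < k then (if Q = P \<and> i = k - 1 then 1 else 0) else (if i = n then B Q P else (0::complex)))"
proof (cases "i < n")
  case True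
  then show ?thesis using assms by (cases "P = Q \<and> k = Suc i") auto
next
  case False
  then have "i = n" using assms by simp
  then show ?thesis using assms by (cases "1 < k") auto
qed

lemma line_coupling_swap:
  assumes "1 \<le> i" "i \<le> n" "1 \<le> k" "k \<le> n" "\<kappa> P 0 = \<kappa> Q n" "\<kappa> Q 0 = \<kappa> P n"
    "A P Q = B Q P" "A Q P = B P Q"
  shows "line_coupling n \<kappa> A B P i Q k = line_coupling n \<kappa> A B Q k P i"
  unfolding line_coupling_def
    line_coupling_right_eq_left[of i n k \<kappa> Q P A B, OF assms(1-4,6,7)]
    line_coupling_right_eq_left[of k n i \<kappa> P Q A B, OF assms(3,4,1,2,5,8)]
  by (simp add: add.commute)

lemma line_coupling_real:
  "A P Q \<in> \<real> \<Longrightarrow> B P Q \<in> \<real> \<Longrightarrow> line_coupling n \<kappa> A B P i Q k \<in> \<real>"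
  unfolding line_coupling_def by (auto intro!: Reals_add Reals_mult)

lemma sum_unit_weight:
  fixes f :: "nat \<Rightarrow> complex"
  assumes "K < N"
  shows "(\<Sum>K'<N. f K' * (if P \<and> K' = K \<and> Q then 1 else 0)) = (if P \<and> Q then f K else 0)"
proof -
  have "(\<lambda>K'. f K' * (if P \<and> K' = K \<and> Q then 1 else 0)) = (\<lambda>K'. if K' = K then (if P \<and> Q then f K else 0) else 0)"
    by auto
  then show ?thesis using assms by (simp only:) simp
qed

lemma flux_pair_split:
  "(a::complex) * ((if c then p else 0) - z) + b * ((if c then q else 0) - z)
     = (if c then a * p + b * q else 0) - (a + b) * z"
  by (cases c) (simp_all add: algebra_simps)

context
  fixes Nx Ny nx ny :: nat and Ixn1 Ix1n Jyn1 Jy1n :: "nat \<Rightarrow> nat \<Rightarrow> complex"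
    and I J i j K L k l :: nat
  assumes a: "I < Nx" "J < Ny" "1 \<le> i" "i \<le> nx" "1 \<le> j" "j \<le> ny"
    and b: "K < Nx" "L < Ny" "1 \<le> k" "k \<le> nx" "1 \<le> l" "l \<le> ny"
begin

abbreviation unit_ext :: "nat \<Rightarrow> nat \<Rightarrow> complex" where
  "unit_ext \<equiv> patch_ext Nx Ny nx ny Ixn1 Ix1n Jyn1 Jy1n (\<lambda>c. if c = (K, L, k, l) then 1 else 0) I J"

lemma unit_ext_centre: "unit_ext i j = (if (I, J, i, j) = (K, L, k, l) then 1 else 0)"
  unfolding patch_ext_def using a by simp

lemma unit_ext_right:
  "unit_ext (Suc i) j = (if J = L \<and> j = l then (if i < nx then (if I = K \<and> k = Suc i then 1 else 0)
     else (if k = 1 then Ixn1 I K else 0)) else 0)"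
proof (cases "i < nx")
  case True
  then show ?thesis unfolding patch_ext_def using a by auto
next
  case False
  then have "i = nx" using a by simp
  then show ?thesis unfolding patch_ext_def using a b sum_unit_weight[of K Nx _ True] by auto
qed

lemma unit_ext_left:
  "unit_ext (i - 1) j = (if J = L \<and> j = l then (if 1 < i then (if I = K \<and> k = i - 1 then 1 else 0)
     else (if k = nx then Ix1n I K else 0)) else 0)"
proof (cases "1 < i")
  case True
  then show ?thesis unfolding patch_ext_def using a by auto
next
  case False
  then have "i = 1" using a by simp
  then show ?thesis unfolding patch_ext_def using a b sum_unit_weight[of K Nx _ True] by auto
qed

lemma unit_ext_up:
  "unit_ext i (Suc j) = (if I = K \<and> i = k then (if j < ny then (if J = L \<and> l = Suc j then 1 else 0)
     else (if l = 1 then Jyn1 J L else 0)) else 0)"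
proof (cases "j < ny")
  case True
  then show ?thesis unfolding patch_ext_def using a by auto
next
  case False
  then have "j = ny" using a by simp
  then show ?thesis unfolding patch_ext_def using a b by (auto simp: sum_unit_weight)
qed

lemma unit_ext_down:
  "unit_ext i (j - 1) = (if I = K \<and> i = k then (if 1 < j then (if J = L \<and> l = j - 1 then 1 else 0)
     else (if l = ny then Jy1n J L else 0)) else 0)"
proof (cases "1 < j")
  case True
  then show ?thesis unfolding patch_ext_def using a by auto
next
  case False
  then have "j = 1" using a by simp
  then show ?thesis unfolding patch_ext_def using a b by (auto simp: sum_unit_weight)
qed

lemma patch_matrix_entry:
  "patch_matrix Nx Ny nx ny dx dy kx ky Ixn1 Ix1n Jyn1 Jy1n (I, J, i, j) (K, L, k, l) =
    ((if J = L \<and> j = l then line_coupling nx (\<lambda>P i. kx P J i j) Ixn1 Ix1n I i K k else 0)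
       - of_real (kx I J i j + kx I J (i - 1) j) * (if (I, J, i, j) = (K, L, k, l) then 1 else 0))
     / of_real (dx\<^sup>2)
  + ((if I = K \<and> i = k then line_coupling ny (\<lambda>P j. ky I P i j) Jyn1 Jy1n J j L l else 0)
       - of_real (ky I J i j + ky I J i (j - 1)) * (if (I, J, i, j) = (K, L, k, l) then 1 else 0))
     / of_real (dy\<^sup>2)"
proof -
  have "patch_matrix Nx Ny nx ny dx dy kx ky Ixn1 Ix1n Jyn1 Jy1n (I, J, i, j) (K, L, k, l) =
     (of_real (kx I J i j) * (unit_ext (Suc i) j - unit_ext i j)
       + of_real (kx I J (i - 1) j) * (unit_ext (i - 1) j - unit_ext i j)) / of_real (dx\<^sup>2)
   + (of_real (ky I J i j) * (unit_ext i (Suc j) - unit_ext i j)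
       + of_real (ky I J i (j - 1)) * (unit_ext i (j - 1) - unit_ext i j)) / of_real (dy\<^sup>2)"
    unfolding patch_matrix_def patch_op_def Let_def by simp
  also have "\<dots> = ((if J = L \<and> j = l then line_coupling nx (\<lambda>P i. kx P J i j) Ixn1 Ix1n I i K k else 0)
       - of_real (kx I J i j + kx I J (i - 1) j) * (if (I, J, i, j) = (K, L, k, l) then 1 else 0))
     / of_real (dx\<^sup>2)
  + ((if I = K \<and> i = k then line_coupling ny (\<lambda>P j. ky I P i j) Jyn1 Jy1n J j L l else 0)
       - of_real (ky I J i j + ky I J i (j - 1)) * (if (I, J, i, j) = (K, L, k, l) then 1 else 0))
     / of_real (dy\<^sup>2)"
    unfolding unit_ext_right unit_ext_left unit_ext_up unit_ext_down unit_ext_centre[symmetric]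
      line_coupling_def of_real_add
    by (simp only: flux_pair_split)
  finally show ?thesis .
qed

end

lemma patch_matrix_real:
  assumes "a \<in> interior_idx Nx Ny nx ny" "b \<in> interior_idx Nx Ny nx ny"
    and Ix_real: "\<And>P Q. P < Nx \<Longrightarrow> Q < Nx \<Longrightarrow> Ixn1 P Q \<in> \<real> \<and> Ix1n P Q \<in> \<real>"
    and Jy_real: "\<And>P Q. P < Ny \<Longrightarrow> Q < Ny \<Longrightarrow> Jyn1 P Q \<in> \<real> \<and> Jy1n P Q \<in> \<real>"
  shows "patch_matrix Nx Ny nx ny dx dy kx ky Ixn1 Ix1n Jyn1 Jy1n a b \<in> \<real>"
proof -
  obtain I J i j K L k l where ab: "a = (I, J, i, j)" "b = (K, L, k, l)"
    by (cases a, cases b) auto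
  have ar: "I < Nx" "J < Ny" "1 \<le> i" "i \<le> nx" "1 \<le> j" "j \<le> ny"
    and br: "K < Nx" "L < Ny" "1 \<le> k" "k \<le> nx" "1 \<le> l" "l \<le> ny"
    using assms(1,2) unfolding ab interior_idx_def by auto
  show ?thesis
    unfolding ab patch_matrix_entry[OF ar br] using ar br Ix_real Jy_real
    by (auto intro!: Reals_add Reals_diff Reals_mult Reals_divide line_coupling_real)
qed

lemma patch_matrix_symmetric:
  assumes "a \<in> interior_idx Nx Ny nx ny" "b \<in> interior_idx Nx Ny nx ny"
    and kx_per: "\<And>I K J j. I < Nx \<Longrightarrow> K < Nx \<Longrightarrow> J < Ny \<Longrightarrow> 1 \<le> j \<Longrightarrow> j \<le> ny \<Longrightarrow>
                   kx I J 0 j = kx K J nx j"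
    and ky_per: "\<And>I J K i. I < Nx \<Longrightarrow> J < Ny \<Longrightarrow> K < Ny \<Longrightarrow> 1 \<le> i \<Longrightarrow> i \<le> nx \<Longrightarrow>
                   ky I J i 0 = ky I K i ny"
    and Ix_transp: "\<And>P Q. P < Nx \<Longrightarrow> Q < Nx \<Longrightarrow> Ixn1 P Q = Ix1n Q P"
    and Jy_transp: "\<And>P Q. P < Ny \<Longrightarrow> Q < Ny \<Longrightarrow> Jyn1 P Q = Jy1n Q P"
  shows "patch_matrix Nx Ny nx ny dx dy kx ky Ixn1 Ix1n Jyn1 Jy1n a b =
         patch_matrix Nx Ny nx ny dx dy kx ky Ixn1 Ix1n Jyn1 Jy1n b a"
proof -
  obtain I J i j K L k l where ab: "a = (I, J, i, j)" "b = (K, L, k, l)"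
    by (cases a, cases b) auto
  have ar: "I < Nx" "J < Ny" "1 \<le> i" "i \<le> nx" "1 \<le> j" "j \<le> ny"
    and br: "K < Nx" "L < Ny" "1 \<le> k" "k \<le> nx" "1 \<le> l" "l \<le> ny"
    using assms(1,2) unfolding ab interior_idx_def by auto
  have "line_coupling nx (\<lambda>P i. kx P J i j) Ixn1 Ix1n I i K k
      = line_coupling nx (\<lambda>P i. kx P J i j) Ixn1 Ix1n K k I i"
    using ar br by (intro line_coupling_swap) (auto intro: kx_per Ix_transp)
  moreover have "line_coupling ny (\<lambda>P j. ky I P i j) Jyn1 Jy1n J j L l
      = line_coupling ny (\<lambda>P j. ky I P i j) Jyn1 Jy1n L l J j"
    using ar br by (intro line_coupling_swap) (auto intro: ky_per Jy_transp)
  ultimately show ?thesis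
    unfolding ab patch_matrix_entry[OF ar br] patch_matrix_entry[OF br ar] by auto
qed

theorem corollary7:
  fixes Nx Ny nx ny :: nat
    and dx dy Hx Hy :: real
    and kx ky :: "nat \<Rightarrow> nat \<Rightarrow> nat \<Rightarrow> nat \<Rightarrow> real"
    and Ixn1 Ix1n Jyn1 Jy1n :: "nat \<Rightarrow> nat \<Rightarrow> complex"
  assumes "Nx \<ge> 1" and "Ny \<ge> 1" and "nx \<ge> 1" and "ny \<ge> 1"
    and "dx > 0" and "dy > 0" and "Hx > 0" and "Hy > 0"
    and kx_per: "\<And>I K J j. I < Nx \<Longrightarrow> K < Nx \<Longrightarrow> J < Ny \<Longrightarrow> 1 \<le> j \<Longrightarrow> j \<le> ny \<Longrightarrow>
                   kx I J 0 j = kx K J nx j"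
    and ky_per: "\<And>I J K i. I < Nx \<Longrightarrow> J < Ny \<Longrightarrow> K < Ny \<Longrightarrow> 1 \<le> i \<Longrightarrow> i \<le> nx \<Longrightarrow>
                   ky I J i 0 = ky I K i ny"
    and Ix: "interp_coeffs Nx Hx (real nx * dx / Hx) Ixn1 Ix1n"
    and Jy: "interp_coeffs Ny Hy (real ny * dy / Hy) Jyn1 Jy1n"
  shows "\<forall>a\<in>interior_idx Nx Ny nx ny. \<forall>b\<in>interior_idx Nx Ny nx ny.
           patch_matrix Nx Ny nx ny dx dy kx ky Ixn1 Ix1n Jyn1 Jy1n a b \<in> \<real> \<and>
           patch_matrix Nx Ny nx ny dx dy kx ky Ixn1 Ix1n Jyn1 Jy1n a b =
           patch_matrix Nx Ny nx ny dx dy kx ky Ixn1 Ix1n Jyn1 Jy1n b a"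
proof (intro ballI conjI)
  have Ix_transp: "\<And>P Q. P < Nx \<Longrightarrow> Q < Nx \<Longrightarrow> Ixn1 P Q = Ix1n Q P"
    using interp_coeffs_transpose[OF Ix] \<open>Nx \<ge> 1\<close> by simp
  have Jy_transp: "\<And>P Q. P < Ny \<Longrightarrow> Q < Ny \<Longrightarrow> Jyn1 P Q = Jy1n Q P"
    using interp_coeffs_transpose[OF Jy] \<open>Ny \<ge> 1\<close> by simp
  fix a b
  assume ab: "a \<in> interior_idx Nx Ny nx ny" "b \<in> interior_idx Nx Ny nx ny"
  show "patch_matrix Nx Ny nx ny dx dy kx ky Ixn1 Ix1n Jyn1 Jy1n a b \<in> \<real>"
    using ab interp_coeffs_real[OF Ix] interp_coeffs_real[OF Jy] Ix_transp Jy_transp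
    by (intro patch_matrix_real) metis+
  show "patch_matrix Nx Ny nx ny dx dy kx ky Ixn1 Ix1n Jyn1 Jy1n a b =
        patch_matrix Nx Ny nx ny dx dy kx ky Ixn1 Ix1n Jyn1 Jy1n b a"
    using ab kx_per ky_per Ix_transp Jy_transp by (rule patch_matrix_symmetric)
qed

end
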